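(* Let $\mathcal C$ be a Markov category with conditionals and precise supports, and $o:I\to X$ a deterministic state. Then in $\mathrm{Cond}(\mathcal C)$ the conditioning effect $(:=o)=(X,\mathrm{id}_X,o):X\leadsto I$ satisfies $(:=o)\bullet\big((:=o)\otimes \mathrm{Id}_X\big)\bullet J(\mathrm{copy}_X)=(:=o)$; i.e. $(x:=o);(x:=o)\approx(x:=o)$, so the effect $(:=o)$ is copyable.
   Context: A Markov category is a symmetric monoidal category $(\mathcal C,\otimes,I)$ (assumed strict) in which every object $X$ carries a commutative comonoid $\mathrm{copy}_X$, $\mathrm{del}_X$ compatible with $\otimes$, and $I$ is terminal. A morphism $f$ is deterministic if $\mathrm{copy}_Y f=(f\otimes f)\mathrm{copy}_X$. $\langle f,g\rangle=(f\otimes g)\mathrm{copy}_A$; marginals $f_X=(\mathrm{id}_X\otimes\mathrm{del}_Y)f$, $f_Y=(\mathrm{del}_X\otimes\mathrm{id}_Y)f$. A conditional of $f:A\to X\otimes Y$ w.r.t. $X$ is $f|_X:X\otimes A\to Y$ with $f=(\mathrm{id}_X\otimes f|_X)(\mathrm{copy}_X\otimes\mathrm{id}_A)(f_X\otimes\mathrm{id}_A)\mathrm{copy}_A$ (symmetrically w.r.t. $Y$); $\mathcal C$ has conditionals if these always exist. $f=_\mu g$ means $\langle\mathrm{id},f\rangle\mu=\langle\mathrm{id},g\rangle\mu$; $\mu\ll\nu$ means $f=_\nu g\Rightarrow f=_\mu g$ for all $f,g$. Precise supports: for deterministic $x:I\to X$, $y:I\to Y$, any $f:X\to Y$, $\mu:I\to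 X$: $x\otimes y\ll\langle\mathrm{id}_X,f\rangle\mu$ iff ($x\ll\mu$ and $y\ll fx$). $\mathrm{Obs}(\mathcal C)$: same objects as $\mathcal C$; morphisms $X\leadsto Y$ are triples $(K,f,o)$, $f:X\to Y\otimes K$, $o:I\to K$ deterministic; identity $\mathrm{Id}_X=(I,\mathrm{id}_X,\mathrm{id}_I)$; composition $(K',f',o')\bullet(K,f,o)=(K'\otimes K,(f'\otimes\mathrm{id}_K)f,o'\otimes o)$; tensor of $(K,f,o):X\leadsto Y$, $(K',f',o'):X'\leadsto Y'$ is $(K'\otimes K,(\mathrm{id}_{Y'}\otimes\mathrm{swap}_{K',Y}\otimes\mathrm{id}_K)(f'\otimes f),o'\otimes o)$; $J(f)=(I,f,\mathrm{id}_I)$. For states $(K,\psi,o),(K',\psi',o'):I\leadsto X$, $(K,\psi,o)\sim(K',\psi',o')$ iff either ($o\ll\psi_K$, $o'\ll\psi'_{K'}$ and $\psi|_Ko=\psi'|_{K'}o'$, $\psi|_K:K\to X$ a conditional w.r.t. $K$) or ($o\not\ll\psi_K$ and $o'\not\ll\psi'_{K'}$). For $F,G:X\leadsto Y$, $F\approx G$ iff for every $A$ and every state $\Psi:I\leadsto A\otimes X$, $(\mathrm{Id}_A\otimes F)\bullet\Psi\sim(\mathrm{Id}_A\otimes G)\bullet\Psi$. $\mathrm{Cond}(\mathcal C)=\mathrm{Obs}(\mathcal C)/{\approx}$. *)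

theory Defs
  imports Main
begin

text \<open>A (small, possibly large-carrier) category given by an object set, hom-sets,
composition (cmp g f = g after f), identities; a strict monoidal structure
(otens on objects, mtens on morphisms, unit object unito); a symmetry swp;
and copy (cpy) / delete (dl) maps.\<close>

record ('o, 'm) mcat =
  Ob :: "'o set"
  Hom :: "'o \<Rightarrow> 'o \<Rightarrow> 'm set"
  cmp :: "'m \<Rightarrow> 'm \<Rightarrow> 'm"
  idm :: "'o \<Rightarrow> 'm"
  otens :: "'o \<Rightarrow> 'o \<Rightarrow> 'o"
  mtens :: "'m \<Rightarrow> 'm \<Rightarrow> 'm"
  unito :: "'o"
  swp :: "'o \<Rightarrow> 'o \<Rightarrow> 'm"
  cpy :: "'o \<Rightarrow> 'm"
  dl :: "'o \<Rightarrow> 'm"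

definition category_ax :: "('o, 'm, 'z) mcat_scheme \<Rightarrow> bool" where
  "category_ax M \<longleftrightarrow>
     (\<forall>A B f. f \<in> Hom M A B \<longrightarrow> A \<in> Ob M \<and> B \<in> Ob M)
   \<and> (\<forall>A B A' B' f. f \<in> Hom M A B \<longrightarrow> f \<in> Hom M A' B' \<longrightarrow> A = A' \<and> B = B')
   \<and> (\<forall>A \<in> Ob M. idm M A \<in> Hom M A A)
   \<and> (\<forall>A B D f g. f \<in> Hom M A B \<longrightarrow> g \<in> Hom M B D \<longrightarrow> cmp M g f \<in> Hom M A D)
   \<and> (\<forall>A B f. f \<in> Hom M A B \<longrightarrow> cmp M (idm M B) f = f \<and> cmp M f (idm M A) = f)
   \<and> (\<forall>A B D E f g h. f \<in> Hom M A B \<longrightarrow> g \<in> Hom M B D \<longrightarrow> h \<in> Hom M D E \<longrightarrow>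
        cmp M h (cmp M g f) = cmp M (cmp M h g) f)"

definition strict_monoidal_ax :: "('o, 'm, 'z) mcat_scheme \<Rightarrow> bool" where
  "strict_monoidal_ax M \<longleftrightarrow>
     unito M \<in> Ob M
   \<and> (\<forall>A \<in> Ob M. \<forall>B \<in> Ob M. otens M A B \<in> Ob M)
   \<and> (\<forall>A \<in> Ob M. \<forall>B \<in> Ob M. \<forall>D \<in> Ob M.
        otens M (otens M A B) D = otens M A (otens M B D))
   \<and> (\<forall>A \<in> Ob M. otens M (unito M) A = A \<and> otens M A (unito M) = A)
   \<and> (\<forall>A B A' B' f g. f \<in> Hom M A B \<longrightarrow> g \<in> Hom M A' B' \<longrightarrow>
        mtens M f g \<in> Hom M (otens M A A') (otens M B B'))
   \<and> (\<forall>A B A' B' A'' B'' f g h. f \<in> Hom M A B \<longrightarrow> g \<in> Hom M A' B' \<longrightarrow> h \<in> Hom M A'' B'' \<longrightarrow>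
        mtens M (mtens M f g) h = mtens M f (mtens M g h))
   \<and> (\<forall>A B f. f \<in> Hom M A B \<longrightarrow>
        mtens M (idm M (unito M)) f = f \<and> mtens M f (idm M (unito M)) = f)
   \<and> (\<forall>A \<in> Ob M. \<forall>B \<in> Ob M. mtens M (idm M A) (idm M B) = idm M (otens M A B))
   \<and> (\<forall>A B D A' B' D' f g f' g'. f \<in> Hom M A B \<longrightarrow> g \<in> Hom M B D \<longrightarrow>
        f' \<in> Hom M A' B' \<longrightarrow> g' \<in> Hom M B' D' \<longrightarrow>
        mtens M (cmp M g f) (cmp M g' f') = cmp M (mtens M g g') (mtens M f f'))"

definition symmetric_ax :: "('o, 'm, 'z) mcat_scheme \<Rightarrow> bool" where
  "symmetric_ax M \<longleftrightarrow>
     (\<forall>A \<in> Ob M. \<forall>B \<in> Ob M. swp M A B \<in> Hom M (otens M A B) (otens M B A))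
   \<and> (\<forall>A B A' B' f g. f \<in> Hom M A A' \<longrightarrow> g \<in> Hom M B B' \<longrightarrow>
        cmp M (swp M A' B') (mtens M f g) = cmp M (mtens M g f) (swp M A B))
   \<and> (\<forall>A \<in> Ob M. \<forall>B \<in> Ob M. cmp M (swp M B A) (swp M A B) = idm M (otens M A B))
   \<and> (\<forall>A \<in> Ob M. \<forall>B \<in> Ob M. \<forall>D \<in> Ob M.
        swp M A (otens M B D) = cmp M (mtens M (idm M B) (swp M A D)) (mtens M (swp M A B) (idm M D)))
   \<and> (\<forall>A \<in> Ob M. swp M A (unito M) = idm M A)"

definition markov_ax :: "('o, 'm, 'z) mcat_scheme \<Rightarrow> bool" where
  "markov_ax M \<longleftrightarrow>
     (\<forall>A \<in> Ob M. cpy M A \<in> Hom M A (otens M A A) \<and> dl M A \<in> Hom M A (unito M))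
   \<and> (\<forall>A \<in> Ob M. cmp M (mtens M (dl M A) (idm M A)) (cpy M A) = idm M A
              \<and> cmp M (mtens M (idm M A) (dl M A)) (cpy M A) = idm M A)
   \<and> (\<forall>A \<in> Ob M. cmp M (mtens M (cpy M A) (idm M A)) (cpy M A)
              = cmp M (mtens M (idm M A) (cpy M A)) (cpy M A))
   \<and> (\<forall>A \<in> Ob M. cmp M (swp M A A) (cpy M A) = cpy M A)
   \<and> (\<forall>A \<in> Ob M. \<forall>B \<in> Ob M. cpy M (otens M A B)
        = cmp M (mtens M (mtens M (idm M A) (swp M A B)) (idm M B)) (mtens M (cpy M A) (cpy M B)))
   \<and> (\<forall>A \<in> Ob M. \<forall>B \<in> Ob M. dl M (otens M A B) = mtens M (dl M A) (dl M B))
   \<and> cpy M (unito M) = idm M (unito M)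
   \<and> dl M (unito M) = idm M (unito M)
   \<and> (\<forall>A \<in> Ob M. Hom M A (unito M) = {dl M A})"

definition markov_category :: "('o, 'm, 'z) mcat_scheme \<Rightarrow> bool" where
  "markov_category M \<longleftrightarrow> category_ax M \<and> strict_monoidal_ax M \<and> symmetric_ax M \<and> markov_ax M"

definition deterministic :: "('o, 'm, 'z) mcat_scheme \<Rightarrow> 'o \<Rightarrow> 'o \<Rightarrow> 'm \<Rightarrow> bool" where
  "deterministic M A B f \<longleftrightarrow> f \<in> Hom M A B \<and>
     cmp M (cpy M B) f = cmp M (mtens M f f) (cpy M A)"

definition pairing :: "('o, 'm, 'z) mcat_scheme \<Rightarrow> 'o \<Rightarrow> 'm \<Rightarrow> 'm \<Rightarrow> 'm" where
  "pairing M A f g = cmp M (mtens M f g) (cpy M A)"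

definition marg1 :: "('o, 'm, 'z) mcat_scheme \<Rightarrow> 'o \<Rightarrow> 'o \<Rightarrow> 'm \<Rightarrow> 'm" where
  "marg1 M X Y f = cmp M (mtens M (idm M X) (dl M Y)) f"

definition marg2 :: "('o, 'm, 'z) mcat_scheme \<Rightarrow> 'o \<Rightarrow> 'o \<Rightarrow> 'm \<Rightarrow> 'm" where
  "marg2 M X Y f = cmp M (mtens M (dl M X) (idm M Y)) f"

definition is_cond1 :: "('o, 'm, 'z) mcat_scheme \<Rightarrow> 'o \<Rightarrow> 'o \<Rightarrow> 'o \<Rightarrow> 'm \<Rightarrow> 'm \<Rightarrow> bool" where
  "is_cond1 M A X Y f c \<longleftrightarrow> c \<in> Hom M (otens M X A) Y \<and>
     f = cmp M (mtens M (idm M X) c)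
           (cmp M (mtens M (cpy M X) (idm M A))
             (cmp M (mtens M (marg1 M X Y f) (idm M A)) (cpy M A)))"

definition is_cond2 :: "('o, 'm, 'z) mcat_scheme \<Rightarrow> 'o \<Rightarrow> 'o \<Rightarrow> 'o \<Rightarrow> 'm \<Rightarrow> 'm \<Rightarrow> bool" where
  "is_cond2 M A X Y f c \<longleftrightarrow> is_cond1 M A Y X (cmp M (swp M X Y) f) c"

definition has_conditionals :: "('o, 'm, 'z) mcat_scheme \<Rightarrow> bool" where
  "has_conditionals M \<longleftrightarrow>
     (\<forall>A \<in> Ob M. \<forall>X \<in> Ob M. \<forall>Y \<in> Ob M. \<forall>f. f \<in> Hom M A (otens M X Y) \<longrightarrow>
        (\<exists>c. is_cond1 M A X Y f c) \<and> (\<exists>c. is_cond2 M A X Y f c))"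

definition as_eq :: "('o, 'm, 'z) mcat_scheme \<Rightarrow> 'o \<Rightarrow> 'm \<Rightarrow> 'm \<Rightarrow> 'm \<Rightarrow> bool" where
  "as_eq M X \<mu> f g \<longleftrightarrow>
     cmp M (pairing M X (idm M X) f) \<mu> = cmp M (pairing M X (idm M X) g) \<mu>"

definition abs_cont :: "('o, 'm, 'z) mcat_scheme \<Rightarrow> 'o \<Rightarrow> 'm \<Rightarrow> 'm \<Rightarrow> bool" where
  "abs_cont M X \<mu> \<nu> \<longleftrightarrow>
     (\<forall>Y \<in> Ob M. \<forall>f g. f \<in> Hom M X Y \<longrightarrow> g \<in> Hom M X Y \<longrightarrow>
        as_eq M X \<nu> f g \<longrightarrow> as_eq M X \<mu> f g)"

definition precise_supports :: "('o, 'm, 'z) mcat_scheme \<Rightarrow> bool" where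
  "precise_supports M \<longleftrightarrow>
     (\<forall>X \<in> Ob M. \<forall>Y \<in> Ob M. \<forall>x y f \<mu>.
        deterministic M (unito M) X x \<longrightarrow> deterministic M (unito M) Y y \<longrightarrow>
        f \<in> Hom M X Y \<longrightarrow> \<mu> \<in> Hom M (unito M) X \<longrightarrow>
        (abs_cont M (otens M X Y) (mtens M x y) (cmp M (pairing M X (idm M X) f) \<mu>)
          \<longleftrightarrow> abs_cont M X x \<mu> \<and> abs_cont M Y y (cmp M f x)))"

text \<open>A morphism \<open>X \<leadsto> Y\<close> of Obs(C) is a triple \<open>(K, f, o)\<close>; we record its
  domain \<open>X\<close> and codomain \<open>Y\<close> explicitly.\<close>

record ('o, 'm) obsm =
  obs_dom :: 'o
  obs_cod :: 'o
  obs_K :: 'o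
  obs_f :: 'm
  obs_o :: 'm

definition is_obs :: "('o, 'm, 'z) mcat_scheme \<Rightarrow> ('o, 'm) obsm \<Rightarrow> bool" where
  "is_obs M F \<longleftrightarrow> obs_dom F \<in> Ob M \<and> obs_cod F \<in> Ob M \<and> obs_K F \<in> Ob M
     \<and> obs_f F \<in> Hom M (obs_dom F) (otens M (obs_cod F) (obs_K F))
     \<and> deterministic M (unito M) (obs_K F) (obs_o F)"

definition obs_id :: "('o, 'm, 'z) mcat_scheme \<Rightarrow> 'o \<Rightarrow> ('o, 'm) obsm" where
  "obs_id M X = \<lparr>obs_dom = X, obs_cod = X, obs_K = unito M, obs_f = idm M X,
                 obs_o = idm M (unito M)\<rparr>"

definition obs_comp :: "('o, 'm, 'z) mcat_scheme \<Rightarrow> ('o, 'm) obsm \<Rightarrow> ('o, 'm) obsm \<Rightarrow> ('o, 'm) obsm" where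
  "obs_comp M G F = \<lparr>obs_dom = obs_dom F, obs_cod = obs_cod G,
     obs_K = otens M (obs_K G) (obs_K F),
     obs_f = cmp M (mtens M (obs_f G) (idm M (obs_K F))) (obs_f F),
     obs_o = mtens M (obs_o G) (obs_o F)\<rparr>"

definition obs_tensor :: "('o, 'm, 'z) mcat_scheme \<Rightarrow> ('o, 'm) obsm \<Rightarrow> ('o, 'm) obsm \<Rightarrow> ('o, 'm) obsm" where
  "obs_tensor M F' F = \<lparr>obs_dom = otens M (obs_dom F') (obs_dom F),
     obs_cod = otens M (obs_cod F') (obs_cod F),
     obs_K = otens M (obs_K F') (obs_K F),
     obs_f = cmp M (mtens M (mtens M (idm M (obs_cod F')) (swp M (obs_K F') (obs_cod F))) (idm M (obs_K F)))
                   (mtens M (obs_f F') (obs_f F)),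
     obs_o = mtens M (obs_o F') (obs_o F)\<rparr>"

definition obs_J :: "('o, 'm, 'z) mcat_scheme \<Rightarrow> 'o \<Rightarrow> 'o \<Rightarrow> 'm \<Rightarrow> ('o, 'm) obsm" where
  "obs_J M X Y f = \<lparr>obs_dom = X, obs_cod = Y, obs_K = unito M, obs_f = f, obs_o = idm M (unito M)\<rparr>"

definition cond_eff :: "('o, 'm, 'z) mcat_scheme \<Rightarrow> 'o \<Rightarrow> 'm \<Rightarrow> ('o, 'm) obsm" where
  "cond_eff M X s = \<lparr>obs_dom = X, obs_cod = unito M, obs_K = X, obs_f = idm M X, obs_o = s\<rparr>"

definition state_equiv :: "('o, 'm, 'z) mcat_scheme \<Rightarrow> ('o, 'm) obsm \<Rightarrow> ('o, 'm) obsm \<Rightarrow> bool" where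
  "state_equiv M P Q \<longleftrightarrow>
     (abs_cont M (obs_K P) (obs_o P) (marg2 M (obs_cod P) (obs_K P) (obs_f P))
      \<and> abs_cont M (obs_K Q) (obs_o Q) (marg2 M (obs_cod Q) (obs_K Q) (obs_f Q))
      \<and> (\<exists>c c'. is_cond2 M (unito M) (obs_cod P) (obs_K P) (obs_f P) c
              \<and> is_cond2 M (unito M) (obs_cod Q) (obs_K Q) (obs_f Q) c'
              \<and> cmp M c (obs_o P) = cmp M c' (obs_o Q)))
   \<or> (\<not> abs_cont M (obs_K P) (obs_o P) (marg2 M (obs_cod P) (obs_K P) (obs_f P))
      \<and> \<not> abs_cont M (obs_K Q) (obs_o Q) (marg2 M (obs_cod Q) (obs_K Q) (obs_f Q)))"

definition obs_approx :: "('o, 'm, 'z) mcat_scheme \<Rightarrow> ('o, 'm) obsm \<Rightarrow> ('o, 'm) obsm \<Rightarrow> bool" where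
  "obs_approx M F G \<longleftrightarrow>
     (\<forall>A \<in> Ob M. \<forall>\<Psi>. is_obs M \<Psi> \<and> obs_dom \<Psi> = unito M \<and> obs_cod \<Psi> = otens M A (obs_dom F) \<longrightarrow>
        state_equiv M (obs_comp M (obs_tensor M (obs_id M A) F) \<Psi>)
                      (obs_comp M (obs_tensor M (obs_id M A) G) \<Psi>))"

end

theory Submission
  imports Defs
begin

text \<open>
  For a state \<open>\<Psi> = (K, \<psi>, p)\<close> of \<open>A \<otimes> X\<close>, the two sides of the equation yield the states
  \<open>(X \<otimes> X \<otimes> K, (id\<^sub>A \<otimes> g) \<psi>, g (o \<otimes> p))\<close> and \<open>(X \<otimes> K, \<psi>, o \<otimes> p)\<close>, where
  \<open>g = copy\<^sub>X \<otimes> id\<^sub>K\<close>: conditioning twice on \<open>o\<close> just observes a relabelled copy of the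
  same outcome. The map \<open>g\<close> is deterministic and split mono, with retraction
  \<open>r = del\<^sub>X \<otimes> id\<^sub>X \<otimes> id\<^sub>K\<close>. For such a map, \<open>f =\<^bsub>g \<nu>\<^esub> f'\<close> iff \<open>f g =\<^bsub>\<nu>\<^esub> f' g\<close>, so pushing
  forward along \<open>g\<close> preserves and reflects absolute continuity; and if \<open>c\<close> is a conditional
  of \<open>\<psi>\<close>, then \<open>c r\<close> is a conditional of \<open>(id\<^sub>A \<otimes> g) \<psi>\<close> with \<open>c r (g (o \<otimes> p)) = c (o \<otimes> p)\<close>. Hence the
  two states are equivalent.
\<close>

locale markov_cat =
  fixes M :: "('o, 'm, 'z) mcat_scheme"
  assumes markov: "markov_category M"
begin

abbreviation comp (infixr "\<cdot>" 55) where "g \<cdot> f \<equiv> cmp M g f"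
abbreviation tensor (infixr "\<otimes>" 70) where "f \<otimes> g \<equiv> mtens M f g"
abbreviation otensor (infixr "\<odot>" 70) where "A \<odot> B \<equiv> otens M A B"
abbreviation unit_ob ("\<I>") where "\<I> \<equiv> unito M"

lemma category: "category_ax M"
  and strict_monoidal: "strict_monoidal_ax M"
  and symmetric: "symmetric_ax M"
  and markov_ax: "markov_ax M"
  using markov unfolding markov_category_def by auto

lemma hom_obs: "f \<in> Hom M A B \<Longrightarrow> A \<in> Ob M \<and> B \<in> Ob M"
  and id_hom: "A \<in> Ob M \<Longrightarrow> idm M A \<in> Hom M A A"
  and comp_hom: "f \<in> Hom M A B \<Longrightarrow> g \<in> Hom M B D \<Longrightarrow> g \<cdot> f \<in> Hom M A D"
  and comp_id_left: "f \<in> Hom M A B \<Longrightarrow> idm M B \<cdot> f = f"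
  and comp_id_right: "f \<in> Hom M A B \<Longrightarrow> f \<cdot> idm M A = f"
  and comp_assoc: "f \<in> Hom M A B \<Longrightarrow> g \<in> Hom M B D \<Longrightarrow> h \<in> Hom M D E \<Longrightarrow>
      h \<cdot> (g \<cdot> f) = (h \<cdot> g) \<cdot> f"
  using category unfolding category_ax_def by meson+

lemma unit_in_Ob: "\<I> \<in> Ob M"
  and otens_in_Ob: "A \<in> Ob M \<Longrightarrow> B \<in> Ob M \<Longrightarrow> A \<odot> B \<in> Ob M"
  and otens_assoc: "A \<in> Ob M \<Longrightarrow> B \<in> Ob M \<Longrightarrow> D \<in> Ob M \<Longrightarrow> (A \<odot> B) \<odot> D = A \<odot> B \<odot> D"
  and otens_unit_left: "A \<in> Ob M \<Longrightarrow> \<I> \<odot> A = A"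
  and otens_unit_right: "A \<in> Ob M \<Longrightarrow> A \<odot> \<I> = A"
  and tens_hom: "f \<in> Hom M A B \<Longrightarrow> g \<in> Hom M A' B' \<Longrightarrow> f \<otimes> g \<in> Hom M (A \<odot> A') (B \<odot> B')"
  and tens_assoc: "f \<in> Hom M A B \<Longrightarrow> g \<in> Hom M A' B' \<Longrightarrow> h \<in> Hom M A'' B'' \<Longrightarrow>
      (f \<otimes> g) \<otimes> h = f \<otimes> g \<otimes> h"
  and tens_unit_left: "f \<in> Hom M A B \<Longrightarrow> idm M \<I> \<otimes> f = f"
  and tens_unit_right: "f \<in> Hom M A B \<Longrightarrow> f \<otimes> idm M \<I> = f"
  and tens_id: "A \<in> Ob M \<Longrightarrow> B \<in> Ob M \<Longrightarrow> idm M A \<otimes> idm M B = idm M (A \<odot> B)"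
  and interchange: "f \<in> Hom M A B \<Longrightarrow> g \<in> Hom M B D \<Longrightarrow> f' \<in> Hom M A' B' \<Longrightarrow>
      g' \<in> Hom M B' D' \<Longrightarrow> (g \<cdot> f) \<otimes> (g' \<cdot> f') = (g \<otimes> g') \<cdot> (f \<otimes> f')"
  using strict_monoidal unfolding strict_monoidal_ax_def by meson+

lemma swp_hom: "A \<in> Ob M \<Longrightarrow> B \<in> Ob M \<Longrightarrow> swp M A B \<in> Hom M (A \<odot> B) (B \<odot> A)"
  and swp_natural: "f \<in> Hom M A A' \<Longrightarrow> g \<in> Hom M B B' \<Longrightarrow>
      swp M A' B' \<cdot> (f \<otimes> g) = (g \<otimes> f) \<cdot> swp M A B"
  and swp_unit: "A \<in> Ob M \<Longrightarrow> swp M A \<I> = idm M A"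
  using symmetric unfolding symmetric_ax_def by meson+

lemma cpy_hom: "A \<in> Ob M \<Longrightarrow> cpy M A \<in> Hom M A (A \<odot> A)"
  and dl_hom: "A \<in> Ob M \<Longrightarrow> dl M A \<in> Hom M A \<I>"
  and counit_left: "A \<in> Ob M \<Longrightarrow> (dl M A \<otimes> idm M A) \<cdot> cpy M A = idm M A"
  and coassoc: "A \<in> Ob M \<Longrightarrow> (cpy M A \<otimes> idm M A) \<cdot> cpy M A = (idm M A \<otimes> cpy M A) \<cdot> cpy M A"
  and cocomm: "A \<in> Ob M \<Longrightarrow> swp M A A \<cdot> cpy M A = cpy M A"
  and cpy_otens: "A \<in> Ob M \<Longrightarrow> B \<in> Ob M \<Longrightarrow>
      cpy M (A \<odot> B) = ((idm M A \<otimes> swp M A B) \<otimes> idm M B) \<cdot> (cpy M A \<otimes> cpy M B)"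
  and cpy_unit: "cpy M \<I> = idm M \<I>"
  using markov_ax unfolding markov_ax_def by meson+

lemmas otens_simps = otens_assoc otens_in_Ob otens_unit_left otens_unit_right unit_in_Ob

lemma deterministic_hom: "deterministic M A B f \<Longrightarrow> f \<in> Hom M A B"
  unfolding deterministic_def by simp

lemma deterministic_state_cpy:
  assumes "deterministic M \<I> X s"
  shows "cpy M X \<cdot> s = s \<otimes> s"
proof -
  have s: "s \<in> Hom M \<I> X" and "cpy M X \<cdot> s = (s \<otimes> s) \<cdot> cpy M \<I>"
    using assms unfolding deterministic_def by auto
  moreover have "s \<otimes> s \<in> Hom M \<I> (X \<odot> X)"
    using tens_hom[OF s s] by (simp add: otens_simps)
  ultimately show ?thesis using cpy_unit comp_id_right by metis
qed

lemma middle_swap_natural: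
  assumes f: "f \<in> Hom M A B" and g: "g \<in> Hom M A' B'"
  shows "((idm M B \<otimes> swp M B B') \<otimes> idm M B') \<cdot> ((f \<otimes> f) \<otimes> (g \<otimes> g))
       = ((f \<otimes> g) \<otimes> (f \<otimes> g)) \<cdot> ((idm M A \<otimes> swp M A A') \<otimes> idm M A')"
proof -
  have ob: "A \<in> Ob M" "B \<in> Ob M" "A' \<in> Ob M" "B' \<in> Ob M" using hom_obs f g by auto
  have iA: "idm M A \<in> Hom M A A" and iA': "idm M A' \<in> Hom M A' A'"
    and iB: "idm M B \<in> Hom M B B" and iB': "idm M B' \<in> Hom M B' B'"
    using id_hom ob by auto
  have swA: "swp M A A' \<in> Hom M (A \<odot> A') (A' \<odot> A)"
    and swB: "swp M B B' \<in> Hom M (B \<odot> B') (B' \<odot> B)" using swp_hom ob by auto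
  have fg: "f \<otimes> g \<in> Hom M (A \<odot> A') (B \<odot> B')" and gf: "g \<otimes> f \<in> Hom M (A' \<odot> A) (B' \<odot> B)"
    using tens_hom f g by auto
  have "((idm M B \<otimes> swp M B B') \<otimes> idm M B') \<cdot> ((f \<otimes> f) \<otimes> (g \<otimes> g))
      = ((idm M B \<otimes> swp M B B') \<otimes> idm M B') \<cdot> ((f \<otimes> (f \<otimes> g)) \<otimes> g)"
    using tens_assoc f g fg tens_hom by metis
  also have "\<dots> = (f \<otimes> (swp M B B' \<cdot> (f \<otimes> g))) \<otimes> g"
    using interchange[OF tens_hom[OF f fg] tens_hom[OF iB swB] g iB'] interchange[OF f iB fg swB]
      comp_id_left f g by simp
  also have "\<dots> = (f \<otimes> ((g \<otimes> f) \<cdot> swp M A A')) \<otimes> g"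
    using swp_natural[OF f g] by simp
  also have "\<dots> = ((f \<otimes> (g \<otimes> f)) \<otimes> g) \<cdot> ((idm M A \<otimes> swp M A A') \<otimes> idm M A')"
    using interchange[OF tens_hom[OF iA swA] tens_hom[OF f gf] iA' g] interchange[OF iA f swA gf]
      comp_id_right f g by simp
  also have "(f \<otimes> (g \<otimes> f)) \<otimes> g = (f \<otimes> g) \<otimes> (f \<otimes> g)"
    using tens_assoc f g fg gf by metis
  finally show ?thesis .
qed

lemma deterministic_tensor:
  assumes df: "deterministic M A B f" and dg: "deterministic M A' B' g"
  shows "deterministic M (A \<odot> A') (B \<odot> B') (f \<otimes> g)"
proof -
  have f: "f \<in> Hom M A B" and cf: "cpy M B \<cdot> f = (f \<otimes> f) \<cdot> cpy M A"
    and g: "g \<in> Hom M A' B'" and cg: "cpy M B' \<cdot> g = (g \<otimes> g) \<cdot> cpy M A'"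
    using df dg unfolding deterministic_def by auto
  have ob: "A \<in> Ob M" "B \<in> Ob M" "A' \<in> Ob M" "B' \<in> Ob M" using hom_obs f g by auto
  define SA where "SA = (idm M A \<otimes> swp M A A') \<otimes> idm M A'"
  define SB where "SB = (idm M B \<otimes> swp M B B') \<otimes> idm M B'"
  have SA: "SA \<in> Hom M (A \<odot> A \<odot> A' \<odot> A') (A \<odot> A' \<odot> A \<odot> A')"
    and SB: "SB \<in> Hom M (B \<odot> B \<odot> B' \<odot> B') (B \<odot> B' \<odot> B \<odot> B')"
    unfolding SA_def SB_def using tens_hom[OF tens_hom[OF id_hom swp_hom] id_hom] ob
    by (simp_all add: otens_simps)
  have cA: "cpy M A \<otimes> cpy M A' \<in> Hom M (A \<odot> A') (A \<odot> A \<odot> A' \<odot> A')"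
    and cB: "cpy M B \<otimes> cpy M B' \<in> Hom M (B \<odot> B') (B \<odot> B \<odot> B' \<odot> B')"
    using tens_hom[OF cpy_hom cpy_hom] ob by (simp_all add: otens_simps)
  have fg: "f \<otimes> g \<in> Hom M (A \<odot> A') (B \<odot> B')" using tens_hom f g by auto
  have ffgg: "(f \<otimes> f) \<otimes> (g \<otimes> g) \<in> Hom M (A \<odot> A \<odot> A' \<odot> A') (B \<odot> B \<odot> B' \<odot> B')"
    using tens_hom[OF tens_hom[OF f f] tens_hom[OF g g]] ob by (simp add: otens_simps)
  have fgfg: "(f \<otimes> g) \<otimes> (f \<otimes> g) \<in> Hom M (A \<odot> A' \<odot> A \<odot> A') (B \<odot> B' \<odot> B \<odot> B')"
    using tens_hom[OF fg fg] ob by (simp add: otens_simps)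
  have "cpy M (B \<odot> B') \<cdot> (f \<otimes> g) = SB \<cdot> (cpy M B \<otimes> cpy M B') \<cdot> (f \<otimes> g)"
    using cpy_otens ob comp_assoc[OF fg cB SB] SB_def by simp
  also have "(cpy M B \<otimes> cpy M B') \<cdot> (f \<otimes> g) = ((f \<otimes> f) \<otimes> (g \<otimes> g)) \<cdot> (cpy M A \<otimes> cpy M A')"
    using interchange[OF f cpy_hom g cpy_hom] interchange[OF cpy_hom tens_hom[OF f f] cpy_hom tens_hom[OF g g]]
      cf cg ob by simp
  also have "SB \<cdot> ((f \<otimes> f) \<otimes> (g \<otimes> g)) \<cdot> (cpy M A \<otimes> cpy M A')
      = ((f \<otimes> g) \<otimes> (f \<otimes> g)) \<cdot> SA \<cdot> (cpy M A \<otimes> cpy M A')"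
    using comp_assoc[OF cA ffgg SB] comp_assoc[OF cA SA fgfg] middle_swap_natural[OF f g]
    unfolding SA_def SB_def by simp
  also have "SA \<cdot> (cpy M A \<otimes> cpy M A') = cpy M (A \<odot> A')"
    using cpy_otens ob SA_def by simp
  finally show ?thesis unfolding deterministic_def using fg by simp
qed

lemma deterministic_id: "A \<in> Ob M \<Longrightarrow> deterministic M A A (idm M A)"
  unfolding deterministic_def using id_hom comp_id_left comp_id_right cpy_hom tens_id by metis


lemma cpy_tens_cpy_comp_cpy:
  assumes A: "A \<in> Ob M"
  shows "(cpy M A \<otimes> cpy M A) \<cdot> cpy M A = (idm M A \<otimes> ((cpy M A \<otimes> idm M A) \<cdot> cpy M A)) \<cdot> cpy M A"
proof -
  have cp: "cpy M A \<in> Hom M A (A \<odot> A)" and iA: "idm M A \<in> Hom M A A"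
    and iAA: "idm M (A \<odot> A) \<in> Hom M (A \<odot> A) (A \<odot> A)"
    using cpy_hom id_hom otens_in_Ob A by auto
  have iAcp: "idm M A \<otimes> cpy M A \<in> Hom M (A \<odot> A) (A \<odot> A \<odot> A)"
    and cpiA: "cpy M A \<otimes> idm M A \<in> Hom M (A \<odot> A) (A \<odot> A \<odot> A)"
    and iAAcp: "idm M (A \<odot> A) \<otimes> cpy M A \<in> Hom M (A \<odot> A \<odot> A) (A \<odot> A \<odot> A \<odot> A)"
    using tens_hom[OF iA cp] tens_hom[OF cp iA] tens_hom[OF iAA cp] A by (simp_all add: otens_simps)
  have "(cpy M A \<otimes> cpy M A) \<cdot> cpy M A = (idm M (A \<odot> A) \<otimes> cpy M A) \<cdot> (cpy M A \<otimes> idm M A) \<cdot> cpy M A"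
    using interchange[OF cp iAA iA cp] comp_id_left[OF cp] comp_id_right[OF cp]
      comp_assoc[OF cp cpiA iAAcp] by simp
  also have "\<dots> = ((idm M (A \<odot> A) \<otimes> cpy M A) \<cdot> (idm M A \<otimes> cpy M A)) \<cdot> cpy M A"
    using coassoc A comp_assoc[OF cp iAcp iAAcp] by simp
  also have "(idm M (A \<odot> A) \<otimes> cpy M A) \<cdot> (idm M A \<otimes> cpy M A) = idm M A \<otimes> ((cpy M A \<otimes> idm M A) \<cdot> cpy M A)"
    using coassoc A tens_id[OF A A] tens_assoc[OF iA iA cp] interchange[OF iA iA cp iAcp]
      comp_id_left[OF iA] by simp
  finally show ?thesis .
qed

lemma swp_tens_id_comp_triple_cpy:
  assumes A: "A \<in> Ob M"
  shows "(swp M A A \<otimes> idm M A) \<cdot> (cpy M A \<otimes> idm M A) \<cdot> cpy M A = (cpy M A \<otimes> idm M A) \<cdot> cpy M A"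
proof -
  have cp: "cpy M A \<in> Hom M A (A \<odot> A)" and iA: "idm M A \<in> Hom M A A"
    and sw: "swp M A A \<in> Hom M (A \<odot> A) (A \<odot> A)"
    using cpy_hom id_hom swp_hom A by auto
  have cpiA: "cpy M A \<otimes> idm M A \<in> Hom M (A \<odot> A) (A \<odot> A \<odot> A)"
    and swiA: "swp M A A \<otimes> idm M A \<in> Hom M (A \<odot> A \<odot> A) (A \<odot> A \<odot> A)"
    using tens_hom[OF cp iA] tens_hom[OF sw iA] A by (simp_all add: otens_simps)
  show ?thesis
    using comp_assoc[OF cp cpiA swiA] interchange[OF cp sw iA iA] cocomm A comp_id_left[OF iA]
    by simp
qed

lemma deterministic_cpy:
  assumes A: "A \<in> Ob M"
  shows "deterministic M A (A \<odot> A) (cpy M A)"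
proof -
  have cp: "cpy M A \<in> Hom M A (A \<odot> A)" and iA: "idm M A \<in> Hom M A A"
    and sw: "swp M A A \<in> Hom M (A \<odot> A) (A \<odot> A)"
    using cpy_hom id_hom swp_hom A by auto
  define R where "R = (cpy M A \<otimes> idm M A) \<cdot> cpy M A"
  have R: "R \<in> Hom M A (A \<odot> A \<odot> A)"
    unfolding R_def using comp_hom[OF cp tens_hom[OF cp iA]] A by (simp add: otens_simps)
  have iAR: "idm M A \<otimes> R \<in> Hom M (A \<odot> A) (A \<odot> A \<odot> A \<odot> A)"
    using tens_hom[OF iA R] A by (simp add: otens_simps)
  have swiA: "swp M A A \<otimes> idm M A \<in> Hom M (A \<odot> A \<odot> A) (A \<odot> A \<odot> A)"
    using tens_hom[OF sw iA] A by (simp add: otens_simps)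
  define S where "S = (idm M A \<otimes> swp M A A) \<otimes> idm M A"
  have S: "S \<in> Hom M (A \<odot> A \<odot> A \<odot> A) (A \<odot> A \<odot> A \<odot> A)"
    unfolding S_def using tens_hom[OF tens_hom[OF iA sw] iA] A by (simp add: otens_simps)
  have cpcp: "cpy M A \<otimes> cpy M A \<in> Hom M (A \<odot> A) (A \<odot> A \<odot> A \<odot> A)"
    using tens_hom[OF cp cp] A by (simp add: otens_simps)
  have swap_absorbed: "S \<cdot> (idm M A \<otimes> R) = idm M A \<otimes> R"
    unfolding S_def using tens_assoc[OF iA sw iA] interchange[OF iA iA R swiA] comp_id_left[OF iA]
      swp_tens_id_comp_triple_cpy[OF A] R_def by simp
  have "cpy M (A \<odot> A) \<cdot> cpy M A = S \<cdot> (cpy M A \<otimes> cpy M A) \<cdot> cpy M A"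
    using cpy_otens A comp_assoc[OF cp cpcp S] S_def by simp
  also have "\<dots> = (cpy M A \<otimes> cpy M A) \<cdot> cpy M A"
    using cpy_tens_cpy_comp_cpy[OF A] swap_absorbed comp_assoc[OF cp iAR S] R_def by simp
  finally show ?thesis unfolding deterministic_def using cp by simp
qed

lemma pairing_hom: "f \<in> Hom M A B \<Longrightarrow> pairing M A (idm M A) f \<in> Hom M A (A \<odot> B)"
  unfolding pairing_def using comp_hom cpy_hom tens_hom id_hom hom_obs by metis

lemma pairing_comp_deterministic:
  assumes dg: "deterministic M W Y g" and f: "f \<in> Hom M Y Z"
  shows "pairing M Y (idm M Y) f \<cdot> g = (g \<otimes> idm M Z) \<cdot> pairing M W (idm M W) (f \<cdot> g)"
proof -
  have g: "g \<in> Hom M W Y" and cg: "cpy M Y \<cdot> g = (g \<otimes> g) \<cdot> cpy M W"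
    using dg unfolding deterministic_def by auto
  have ob: "W \<in> Ob M" "Y \<in> Ob M" "Z \<in> Ob M" using hom_obs f g by auto
  have iW: "idm M W \<in> Hom M W W" and iY: "idm M Y \<in> Hom M Y Y" and iZ: "idm M Z \<in> Hom M Z Z"
    and cW: "cpy M W \<in> Hom M W (W \<odot> W)" and cY: "cpy M Y \<in> Hom M Y (Y \<odot> Y)"
    using id_hom cpy_hom ob by auto
  have fg: "f \<cdot> g \<in> Hom M W Z" using comp_hom[OF g f] .
  have "pairing M Y (idm M Y) f \<cdot> g = ((idm M Y \<otimes> f) \<cdot> (g \<otimes> g)) \<cdot> cpy M W"
    unfolding pairing_def using comp_assoc[OF g cY tens_hom[OF iY f]] cg
      comp_assoc[OF cW tens_hom[OF g g] tens_hom[OF iY f]] by simp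
  also have "(idm M Y \<otimes> f) \<cdot> (g \<otimes> g) = (g \<otimes> idm M Z) \<cdot> (idm M W \<otimes> (f \<cdot> g))"
    using interchange[OF g iY g f] interchange[OF iW g fg iZ] comp_id_left comp_id_right g fg
    by simp
  finally show ?thesis
    unfolding pairing_def using comp_assoc[OF cW tens_hom[OF iW fg] tens_hom[OF g iZ]] by simp
qed

lemma split_mono_tens_cancel:
  assumes g: "g \<in> Hom M W Y" and r: "r \<in> Hom M Y W" and rg: "r \<cdot> g = idm M W"
    and Z: "Z \<in> Ob M" and a: "a \<in> Hom M V (W \<odot> Z)" and b: "b \<in> Hom M V (W \<odot> Z)"
  shows "(g \<otimes> idm M Z) \<cdot> a = (g \<otimes> idm M Z) \<cdot> b \<longleftrightarrow> a = b"
proof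
  assume eq: "(g \<otimes> idm M Z) \<cdot> a = (g \<otimes> idm M Z) \<cdot> b"
  have W: "W \<in> Ob M" using hom_obs g by auto
  have iZ: "idm M Z \<in> Hom M Z Z" using id_hom Z by auto
  have retract: "(r \<otimes> idm M Z) \<cdot> (g \<otimes> idm M Z) = idm M (W \<odot> Z)"
    using interchange[OF g r iZ iZ] rg comp_id_left[OF iZ] tens_id[OF W Z] by simp
  have "\<And>x. x \<in> Hom M V (W \<odot> Z) \<Longrightarrow> x = (r \<otimes> idm M Z) \<cdot> (g \<otimes> idm M Z) \<cdot> x"
    using comp_assoc[OF _ tens_hom[OF g iZ] tens_hom[OF r iZ]] retract comp_id_left by metis
  then show "a = b" using a b eq by metis
qed simp

lemma as_eq_comp_split_mono:
  assumes dg: "deterministic M W Y g" and r: "r \<in> Hom M Y W" and rg: "r \<cdot> g = idm M W"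
    and f: "f \<in> Hom M Y Z" and f': "f' \<in> Hom M Y Z" and \<nu>: "\<nu> \<in> Hom M \<I> W"
  shows "as_eq M Y (g \<cdot> \<nu>) f f' \<longleftrightarrow> as_eq M W \<nu> (f \<cdot> g) (f' \<cdot> g)"
proof -
  have g: "g \<in> Hom M W Y" using deterministic_hom dg .
  have Z: "Z \<in> Ob M" using hom_obs f by auto
  have pushed: "pairing M Y (idm M Y) h \<cdot> (g \<cdot> \<nu>)
      = (g \<otimes> idm M Z) \<cdot> (pairing M W (idm M W) (h \<cdot> g) \<cdot> \<nu>)" if h: "h \<in> Hom M Y Z" for h
    using comp_assoc[OF \<nu> g pairing_hom[OF h]] pairing_comp_deterministic[OF dg h]
      comp_assoc[OF \<nu> pairing_hom[OF comp_hom[OF g h]] tens_hom[OF g id_hom[OF Z]]] by simp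
  show ?thesis
    unfolding as_eq_def pushed[OF f] pushed[OF f']
    using split_mono_tens_cancel[OF g r rg Z] comp_hom[OF \<nu> pairing_hom[OF comp_hom[OF g f]]]
      comp_hom[OF \<nu> pairing_hom[OF comp_hom[OF g f']]] by simp
qed

lemma abs_cont_comp_split_mono:
  assumes dg: "deterministic M W Y g" and r: "r \<in> Hom M Y W" and rg: "r \<cdot> g = idm M W"
    and \<mu>: "\<mu> \<in> Hom M \<I> W" and \<nu>: "\<nu> \<in> Hom M \<I> W"
  shows "abs_cont M Y (g \<cdot> \<mu>) (g \<cdot> \<nu>) \<longleftrightarrow> abs_cont M W \<mu> \<nu>"
proof
  have g: "g \<in> Hom M W Y" using deterministic_hom dg .
  note transfer = as_eq_comp_split_mono[OF dg r rg]
  show "abs_cont M W \<mu> \<nu>" if Y: "abs_cont M Y (g \<cdot> \<mu>) (g \<cdot> \<nu>)"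
    unfolding abs_cont_def
  proof (intro ballI allI impI)
    fix Z f f' assume "Z \<in> Ob M" and f: "f \<in> Hom M W Z" and f': "f' \<in> Hom M W Z"
      and "as_eq M W \<nu> f f'"
    have fr: "f \<cdot> r \<in> Hom M Y Z" and f'r: "f' \<cdot> r \<in> Hom M Y Z" using comp_hom r f f' by auto
    have restore: "(h \<cdot> r) \<cdot> g = h" if "h \<in> Hom M W Z" for h
      using comp_assoc[OF g r that] rg comp_id_right[OF that] by simp
    have "as_eq M Y (g \<cdot> \<nu>) (f \<cdot> r) (f' \<cdot> r)"
      using transfer[OF fr f'r \<nu>] restore f f' \<open>as_eq M W \<nu> f f'\<close> by simp
    then have "as_eq M Y (g \<cdot> \<mu>) (f \<cdot> r) (f' \<cdot> r)"
      using Y \<open>Z \<in> Ob M\<close> fr f'r unfolding abs_cont_def by blast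
    then show "as_eq M W \<mu> f f'" using transfer[OF fr f'r \<mu>] restore f f' by simp
  qed
  show "abs_cont M Y (g \<cdot> \<mu>) (g \<cdot> \<nu>)" if W: "abs_cont M W \<mu> \<nu>"
    unfolding abs_cont_def
  proof (intro ballI allI impI)
    fix Z f f' assume "Z \<in> Ob M" and f: "f \<in> Hom M Y Z" and f': "f' \<in> Hom M Y Z"
      and "as_eq M Y (g \<cdot> \<nu>) f f'"
    then have "as_eq M W \<mu> (f \<cdot> g) (f' \<cdot> g)"
      using W transfer[OF f f' \<nu>] comp_hom[OF g f] comp_hom[OF g f'] unfolding abs_cont_def by blast
    then show "as_eq M Y (g \<cdot> \<mu>) f f'" using transfer[OF f f' \<mu>] by simp
  qed
qed

lemma marg1_tens_left:
  assumes f: "f \<in> Hom M V (W \<odot> A)" and g: "g \<in> Hom M W Y" and A: "A \<in> Ob M"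
  shows "marg1 M Y A ((g \<otimes> idm M A) \<cdot> f) = g \<cdot> marg1 M W A f"
proof -
  have ob: "W \<in> Ob M" "Y \<in> Ob M" using hom_obs g by auto
  have iA: "idm M A \<in> Hom M A A" and iW: "idm M W \<in> Hom M W W" and iY: "idm M Y \<in> Hom M Y Y"
    and dA: "dl M A \<in> Hom M A \<I>" and iI: "idm M \<I> \<in> Hom M \<I> \<I>"
    using id_hom dl_hom unit_in_Ob ob A by auto
  have iYdA: "idm M Y \<otimes> dl M A \<in> Hom M (Y \<odot> A) Y"
    and iWdA: "idm M W \<otimes> dl M A \<in> Hom M (W \<odot> A) W"
    using tens_hom[OF iY dA] tens_hom[OF iW dA] ob by (simp_all add: otens_unit_right)
  have "(idm M Y \<otimes> dl M A) \<cdot> (g \<otimes> idm M A) = (g \<otimes> idm M \<I>) \<cdot> (idm M W \<otimes> dl M A)"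
    using interchange[OF g iY iA dA] interchange[OF iW g dA iI] comp_id_left comp_id_right g dA
    by simp
  then show ?thesis
    unfolding marg1_def using tens_unit_right[OF g]
      comp_assoc[OF f tens_hom[OF g iA] iYdA] comp_assoc[OF f iWdA g] by simp
qed

lemma marg2_tens_right:
  assumes f: "f \<in> Hom M V (A \<odot> W)" and g: "g \<in> Hom M W Y" and A: "A \<in> Ob M"
  shows "marg2 M A Y ((idm M A \<otimes> g) \<cdot> f) = g \<cdot> marg2 M A W f"
proof -
  have ob: "W \<in> Ob M" "Y \<in> Ob M" using hom_obs g by auto
  have iA: "idm M A \<in> Hom M A A" and iW: "idm M W \<in> Hom M W W" and iY: "idm M Y \<in> Hom M Y Y"
    and dA: "dl M A \<in> Hom M A \<I>" and iI: "idm M \<I> \<in> Hom M \<I> \<I>"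
    using id_hom dl_hom unit_in_Ob ob A by auto
  have dAiY: "dl M A \<otimes> idm M Y \<in> Hom M (A \<odot> Y) Y"
    and dAiW: "dl M A \<otimes> idm M W \<in> Hom M (A \<odot> W) W"
    using tens_hom[OF dA iY] tens_hom[OF dA iW] ob by (simp_all add: otens_unit_left)
  have "(dl M A \<otimes> idm M Y) \<cdot> (idm M A \<otimes> g) = (idm M \<I> \<otimes> g) \<cdot> (dl M A \<otimes> idm M W)"
    using interchange[OF iA dA g iY] interchange[OF dA iI iW g] comp_id_left comp_id_right g dA
    by simp
  then show ?thesis
    unfolding marg2_def using tens_unit_left[OF g]
      comp_assoc[OF f tens_hom[OF iA g] dAiY] comp_assoc[OF f dAiW g] by simp
qed

lemma marg1_hom: "f \<in> Hom M V (X \<odot> Y) \<Longrightarrow> X \<in> Ob M \<Longrightarrow> Y \<in> Ob M \<Longrightarrow> marg1 M X Y f \<in> Hom M V X"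
  unfolding marg1_def using comp_hom tens_hom[OF id_hom dl_hom] by (metis otens_unit_right)

lemma marg2_hom: "f \<in> Hom M V (X \<odot> Y) \<Longrightarrow> X \<in> Ob M \<Longrightarrow> Y \<in> Ob M \<Longrightarrow> marg2 M X Y f \<in> Hom M V Y"
  unfolding marg2_def using comp_hom tens_hom[OF dl_hom id_hom] by (metis otens_unit_left)

lemma is_cond1_state_iff:
  assumes f: "f \<in> Hom M \<I> (X \<odot> Y)" and X: "X \<in> Ob M" and Y: "Y \<in> Ob M"
  shows "is_cond1 M \<I> X Y f c \<longleftrightarrow> c \<in> Hom M X Y \<and> f = (idm M X \<otimes> c) \<cdot> cpy M X \<cdot> marg1 M X Y f"
  using tens_unit_right[OF cpy_hom[OF X]] tens_unit_right[OF marg1_hom[OF f X Y]] cpy_unit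
    comp_id_right[OF marg1_hom[OF f X Y]] otens_unit_right[OF X]
  unfolding is_cond1_def by simp

lemma is_cond2_tens_split_mono:
  assumes \<psi>: "\<psi> \<in> Hom M \<I> (A \<odot> W)" and A: "A \<in> Ob M"
    and dg: "deterministic M W Y g" and r: "r \<in> Hom M Y W" and rg: "r \<cdot> g = idm M W"
    and c: "is_cond2 M \<I> A W \<psi> c"
  shows "is_cond2 M \<I> A Y ((idm M A \<otimes> g) \<cdot> \<psi>) (c \<cdot> r)"
proof -
  have g: "g \<in> Hom M W Y" and cg: "cpy M Y \<cdot> g = (g \<otimes> g) \<cdot> cpy M W"
    using dg unfolding deterministic_def by auto
  have ob: "W \<in> Ob M" "Y \<in> Ob M" using hom_obs g by auto
  have iA: "idm M A \<in> Hom M A A" and iW: "idm M W \<in> Hom M W W" and iY: "idm M Y \<in> Hom M Y Y"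
    and cW: "cpy M W \<in> Hom M W (W \<odot> W)" and cY: "cpy M Y \<in> Hom M Y (Y \<odot> Y)"
    using id_hom cpy_hom ob A by auto
  define \<rho> where "\<rho> = swp M A W \<cdot> \<psi>"
  define \<nu> where "\<nu> = marg1 M W A \<rho>"
  have \<rho>: "\<rho> \<in> Hom M \<I> (W \<odot> A)" unfolding \<rho>_def using comp_hom[OF \<psi> swp_hom[OF A ob(1)]] .
  have \<nu>: "\<nu> \<in> Hom M \<I> W" unfolding \<nu>_def using marg1_hom[OF \<rho> ob(1) A] .
  have c: "c \<in> Hom M W A" and \<rho>_eq: "\<rho> = (idm M W \<otimes> c) \<cdot> cpy M W \<cdot> \<nu>"
    using c is_cond1_state_iff[OF \<rho> ob(1) A] unfolding is_cond2_def \<rho>_def \<nu>_def by auto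
  have cr: "c \<cdot> r \<in> Hom M Y A" using comp_hom[OF r c] .
  have swapped: "swp M A Y \<cdot> (idm M A \<otimes> g) \<cdot> \<psi> = (g \<otimes> idm M A) \<cdot> \<rho>"
    unfolding \<rho>_def using comp_assoc[OF \<psi> tens_hom[OF iA g] swp_hom[OF A ob(2)]]
      swp_natural[OF iA g] comp_assoc[OF \<psi> swp_hom[OF A ob(1)] tens_hom[OF g iA]] by simp
  have "(idm M Y \<otimes> (c \<cdot> r)) \<cdot> cpy M Y \<cdot> g \<cdot> \<nu> = ((idm M Y \<otimes> (c \<cdot> r)) \<cdot> (g \<otimes> g)) \<cdot> cpy M W \<cdot> \<nu>"
    using comp_assoc[OF \<nu> g cY] cg comp_assoc[OF \<nu> cW tens_hom[OF g g]]
      comp_assoc[OF comp_hom[OF \<nu> cW] tens_hom[OF g g] tens_hom[OF iY cr]] by simp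
  also have "(idm M Y \<otimes> (c \<cdot> r)) \<cdot> (g \<otimes> g) = (g \<otimes> idm M A) \<cdot> (idm M W \<otimes> c)"
    using interchange[OF g iY g cr] interchange[OF iW g c iA] comp_assoc[OF g r c] rg
      comp_id_left comp_id_right g c by simp
  also have "((g \<otimes> idm M A) \<cdot> (idm M W \<otimes> c)) \<cdot> cpy M W \<cdot> \<nu> = (g \<otimes> idm M A) \<cdot> \<rho>"
    unfolding \<rho>_eq using comp_assoc[OF comp_hom[OF \<nu> cW] tens_hom[OF iW c] tens_hom[OF g iA]] by simp
  finally have "(g \<otimes> idm M A) \<cdot> \<rho> = (idm M Y \<otimes> (c \<cdot> r)) \<cdot> cpy M Y \<cdot> marg1 M Y A ((g \<otimes> idm M A) \<cdot> \<rho>)"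
    using marg1_tens_left[OF \<rho> g A] \<nu>_def by simp
  then show ?thesis
    unfolding is_cond2_def swapped
    using is_cond1_state_iff[OF comp_hom[OF \<rho> tens_hom[OF g iA]] ob(2) A] cr by simp
qed

lemma state_equiv_tens_split_mono:
  assumes conds: "has_conditionals M" and \<psi>: "\<psi> \<in> Hom M \<I> (A \<odot> W)" and A: "A \<in> Ob M"
    and dg: "deterministic M W Y g" and r: "r \<in> Hom M Y W" and rg: "r \<cdot> g = idm M W"
    and q: "q \<in> Hom M \<I> W"
  shows "state_equiv M
    \<lparr>obs_dom = D, obs_cod = A, obs_K = Y, obs_f = (idm M A \<otimes> g) \<cdot> \<psi>, obs_o = g \<cdot> q\<rparr>
    \<lparr>obs_dom = D', obs_cod = A, obs_K = W, obs_f = \<psi>, obs_o = q\<rparr>"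
proof -
  have g: "g \<in> Hom M W Y" using deterministic_hom dg .
  have W: "W \<in> Ob M" using hom_obs g by auto
  have "abs_cont M Y (g \<cdot> q) (marg2 M A Y ((idm M A \<otimes> g) \<cdot> \<psi>)) \<longleftrightarrow> abs_cont M W q (marg2 M A W \<psi>)"
    using marg2_tens_right[OF \<psi> g A] abs_cont_comp_split_mono[OF dg r rg q marg2_hom[OF \<psi> A W]]
    by simp
  moreover obtain c where c: "is_cond2 M \<I> A W \<psi> c"
    using conds \<psi> A W unit_in_Ob unfolding has_conditionals_def by blast
  moreover have "(c \<cdot> r) \<cdot> g \<cdot> q = c \<cdot> q"
  proof -
    have c_hom: "c \<in> Hom M W A"
      using c W unfolding is_cond2_def is_cond1_def by (simp add: otens_unit_right)
    show ?thesis
      using comp_assoc[OF q g r] comp_assoc[OF comp_hom[OF q g] r c_hom] rg comp_id_left[OF q] by simp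
  qed
  ultimately show ?thesis
    unfolding state_equiv_def using is_cond2_tens_split_mono[OF \<psi> A dg r rg c] by auto
qed

lemma cpy_tens_id_retraction:
  assumes X: "X \<in> Ob M" and K: "K \<in> Ob M"
  shows "((dl M X \<otimes> idm M X) \<otimes> idm M K) \<cdot> (cpy M X \<otimes> idm M K) = idm M (X \<odot> K)"
proof -
  have d: "dl M X \<otimes> idm M X \<in> Hom M (X \<odot> X) X"
    using tens_hom[OF dl_hom id_hom] X by (metis otens_unit_left)
  show ?thesis
    using interchange[OF cpy_hom[OF X] d id_hom[OF K] id_hom[OF K]] counit_left[OF X]
      comp_id_left[OF id_hom[OF K]] tens_id[OF X K] by simp
qed

lemma obs_comp_copy_effects:
  assumes X: "X \<in> Ob M" and s: "deterministic M \<I> X s" and A: "A \<in> Ob M"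
    and \<Psi>: "is_obs M \<Psi>" "obs_dom \<Psi> = \<I>" "obs_cod \<Psi> = A \<odot> X"
  shows "obs_comp M (obs_tensor M (obs_id M A)
           (obs_comp M (obs_comp M (cond_eff M X s) (obs_tensor M (cond_eff M X s) (obs_id M X)))
              (obs_J M X (X \<odot> X) (cpy M X)))) \<Psi>
       = \<lparr>obs_dom = \<I>, obs_cod = A, obs_K = X \<odot> X \<odot> obs_K \<Psi>,
          obs_f = (idm M A \<otimes> cpy M X \<otimes> idm M (obs_K \<Psi>)) \<cdot> obs_f \<Psi>,
          obs_o = s \<otimes> s \<otimes> obs_o \<Psi>\<rparr>"
proof -
  have K: "obs_K \<Psi> \<in> Ob M" and p: "obs_o \<Psi> \<in> Hom M \<I> (obs_K \<Psi>)"
    using \<Psi> unfolding is_obs_def deterministic_def by auto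
  have sh: "s \<in> Hom M \<I> X" using deterministic_hom s .
  have sw: "swp M X X \<in> Hom M (X \<odot> X) (X \<odot> X)" using swp_hom X by auto
  have "idm M (X \<odot> X) \<cdot> ((idm M \<I> \<otimes> swp M X X) \<otimes> idm M \<I>) \<cdot> idm M (X \<odot> X) = swp M X X"
    using tens_unit_left[OF sw] tens_unit_right[OF sw] comp_id_left[OF sw] comp_id_right[OF sw]
    by simp
  moreover have "idm M (A \<odot> X \<odot> X) \<cdot> (idm M A \<otimes> cpy M X) = idm M A \<otimes> cpy M X"
    using comp_id_left[OF tens_hom[OF id_hom[OF A] cpy_hom[OF X]]] X by (simp add: otens_simps)
  moreover have "(idm M \<I> \<otimes> (s \<otimes> s \<otimes> idm M \<I>) \<otimes> idm M \<I>) \<otimes> obs_o \<Psi> = s \<otimes> s \<otimes> obs_o \<Psi>"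
    using tens_unit_right[OF sh] tens_unit_right[OF tens_hom[OF sh sh]]
      tens_unit_left[OF tens_hom[OF sh sh]] tens_assoc[OF sh sh p] by simp
  ultimately show ?thesis
    using \<Psi> A X K cocomm[OF X] tens_unit_right[OF sw] tens_assoc[OF id_hom[OF A] cpy_hom[OF X] id_hom[OF K]]
    unfolding is_obs_def obs_comp_def obs_tensor_def obs_id_def cond_eff_def obs_J_def
    by (simp add: otens_simps tens_id swp_unit)
qed

lemma obs_comp_cond_eff:
  assumes X: "X \<in> Ob M" and s: "s \<in> Hom M \<I> X" and A: "A \<in> Ob M"
    and \<Psi>: "is_obs M \<Psi>" "obs_dom \<Psi> = \<I>" "obs_cod \<Psi> = A \<odot> X"
  shows "obs_comp M (obs_tensor M (obs_id M A) (cond_eff M X s)) \<Psi>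
       = \<lparr>obs_dom = \<I>, obs_cod = A, obs_K = X \<odot> obs_K \<Psi>, obs_f = obs_f \<Psi>, obs_o = s \<otimes> obs_o \<Psi>\<rparr>"
proof -
  have K: "obs_K \<Psi> \<in> Ob M" and \<psi>: "obs_f \<Psi> \<in> Hom M \<I> ((A \<odot> X) \<odot> obs_K \<Psi>)"
    using \<Psi> unfolding is_obs_def by auto
  have AX: "A \<odot> X \<in> Ob M" using otens_in_Ob A X by auto
  then have "((idm M (A \<odot> X) \<cdot> idm M (A \<odot> X)) \<otimes> idm M (obs_K \<Psi>)) \<cdot> obs_f \<Psi> = obs_f \<Psi>"
    using comp_id_left[OF id_hom[OF AX]] tens_id[OF AX K] comp_id_left[OF \<psi>] by simp
  then show ?thesis
    using \<Psi> A X tens_unit_left[OF s]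
    unfolding is_obs_def obs_comp_def obs_tensor_def obs_id_def cond_eff_def
    by (simp add: otens_simps tens_id swp_unit)
qed

lemma state_equiv_copy_effects:
  assumes conds: "has_conditionals M" and X: "X \<in> Ob M" and s: "deterministic M \<I> X s"
    and A: "A \<in> Ob M" and \<Psi>: "is_obs M \<Psi>" "obs_dom \<Psi> = \<I>" "obs_cod \<Psi> = A \<odot> X"
  shows "state_equiv M
    (obs_comp M (obs_tensor M (obs_id M A) (obs_comp M
      (obs_comp M (cond_eff M X s) (obs_tensor M (cond_eff M X s) (obs_id M X)))
      (obs_J M X (X \<odot> X) (cpy M X)))) \<Psi>)
    (obs_comp M (obs_tensor M (obs_id M A) (cond_eff M X s)) \<Psi>)"
proof -
  define K where "K = obs_K \<Psi>"
  have K: "K \<in> Ob M" and \<psi>: "obs_f \<Psi> \<in> Hom M \<I> (A \<odot> X \<odot> K)"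
    and p: "obs_o \<Psi> \<in> Hom M \<I> K"
    using \<Psi> A X unfolding is_obs_def deterministic_def K_def by (auto simp: otens_simps)
  have sh: "s \<in> Hom M \<I> X" using deterministic_hom s .
  have g: "deterministic M (X \<odot> K) (X \<odot> X \<odot> K) (cpy M X \<otimes> idm M K)"
    using deterministic_tensor[OF deterministic_cpy[OF X] deterministic_id[OF K]] X K
    by (simp add: otens_simps)
  have r: "(dl M X \<otimes> idm M X) \<otimes> idm M K \<in> Hom M (X \<odot> X \<odot> K) (X \<odot> K)"
    using tens_hom[OF tens_hom[OF dl_hom[OF X] id_hom[OF X]] id_hom[OF K]] X K
    by (simp add: otens_simps)
  have q: "s \<otimes> obs_o \<Psi> \<in> Hom M \<I> (X \<odot> K)"
    using tens_hom[OF sh p] by (simp add: otens_simps)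
  have "(cpy M X \<otimes> idm M K) \<cdot> (s \<otimes> obs_o \<Psi>) = s \<otimes> s \<otimes> obs_o \<Psi>"
    using interchange[OF sh cpy_hom[OF X] p id_hom[OF K]] deterministic_state_cpy[OF s]
      comp_id_left[OF p] tens_assoc[OF sh sh p] by simp
  then show ?thesis
    unfolding obs_comp_copy_effects[OF X s A \<Psi>] obs_comp_cond_eff[OF X sh A \<Psi>]
    using state_equiv_tens_split_mono[OF conds \<psi> A g r cpy_tens_id_retraction[OF X K] q]
    by (simp add: K_def)
qed

end

theorem mainTheorem8:
  fixes M :: "('o, 'm) mcat" and X :: 'o and s :: 'm
  assumes "markov_category M"
    and "has_conditionals M"
    and "precise_supports M"
    and "X \<in> Ob M"
    and "deterministic M (unito M) X s"
  shows "obs_approx M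
           (obs_comp M
              (obs_comp M (cond_eff M X s) (obs_tensor M (cond_eff M X s) (obs_id M X)))
              (obs_J M X (otens M X X) (cpy M X)))
           (cond_eff M X s)"
proof -
  interpret markov_cat M by (rule markov_cat.intro) (rule assms(1))
  show ?thesis
    unfolding obs_approx_def
    using state_equiv_copy_effects[OF assms(2) assms(4) assms(5)]
    by (simp add: obs_comp_def obs_J_def)
qed

end
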